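(* Let $Y$ be a closed infinite-dimensional subspace of $\mathfrak X_0$ such that the operator $id|_Y:(Y,\|\cdot\|_{W_0})\to\mathfrak X_{G_0}$ is not compact. Then $(Y,\|\cdot\|_{W_0})$ is not isomorphic to a subspace of $c_0$.
   Context: All spaces are real. Let $c_{00}(\mathbb N)$ be the space of finitely supported real sequences, $(e_n)$ its unit vector basis and $e_n^*$ the coordinate functionals (elements of $c_{00}(\mathbb N)$ act on each other via the usual inner product). For $x\in c_{00}(\mathbb N)$, $\operatorname{supp}x=\{n:x(n)\ne0\}$ and $\operatorname{ran}x$ is the smallest interval of $\mathbb N$ containing $\operatorname{supp}x$; for nonzero $x,y$ write $x<y$ if $\max\operatorname{ran}x<\min\operatorname{ran}y$. For an interval $E\subset\mathbb N$, $Ef=f\cdot\chi_E$. Put $m_1=2^8$, $m_{j+1}=m_j^5$, $n_1=2^7$, $n_{j+1}=(2n_j)^{s_{j+1}}$ with $s_{j+1}=\log_2(m_{j+1}^4)$. $G_0$ is the smallest subset of $c_{00}(\mathbb N)$ such that: (1) it contains all $e_n^*$; (2) it is symmetric; (3) for every $j\in\mathbb N$, every $d\le n_{2j}$ and every $f_1<\dots<f_d$ in $G_0$, it contains $\frac1{m_{2j}}\sum_{i=1}^d f_i$; (4) it contains $\sum_{i=1}^d a_if_i$ whenever $d\in\mathbb N$, $a_i\in\mathbb Q$, $\sum a_i^2\le1$, and $f_i\in G_0$ have pairwise different weights. An $f\in G_0$ has weight $w(f)=m_{2j}$ (and is called a functional with weight) if $f=\frac1{m_{2j}}\sum_{i=1}^d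 f_i$ for some $d\le n_{2j}$ and $f_1<\dots<f_d$ in $G_0$. Fix disjoint infinite sets $\Omega_1,\Omega_2\subset\mathbb N$, let $Q_s$ be the (countable) set of finite sequences $(f_1,\dots,f_d)$ of nonzero elements of $G_0$ with $f_1<\dots<f_d$, and fix an injection $\sigma:Q_s\to\{2j:j\in\Omega_2\}$ with $m_{\sigma(f_1,\dots,f_d)}>\max\{1/|f_i(e_l)|:i\le d,\ l\in\operatorname{supp}f_i\}\cdot\max\operatorname{supp}f_d$. A $\sigma$-$n_{2j+1}$ special sequence is an element $(f_1,\dots,f_{n_{2j+1}})$ of $Q_s$ such that each $f_i$ is a functional with weight, $w(f_1)=m_{2j_1}$ with $j_1\in\Omega_1$ and $n_{2j+1}^2<m_{2j_1}$, and $w(f_{i+1})=m_{\sigma(f_1,\dots,f_i)}$ for $1\le i<n_{2j+1}$. $W_0=G_0\cup\{\varepsilon E(\frac1{m_{2j+1}}\sum_{i=1}^{n_{2j+1}}f_i):|\varepsilon|=1,\ E\text{ a finite interval of }\mathbb N,\ (f_i)\text{ a }\sigma\text{-}n_{2j+1}\text{ special sequence}\}$. For $x\in c_{00}(\mathbb N)$ let $\|x\|_{G_0}=\sup_{f\in G_0}|f(x)|$ and $\|x\|_{W_0}=\sup_{f\in W_0}|f(x)|$; $\mathfrak{X}_{G_0}$ and $\mathfrak{X}_0$ are the completions of $c_{00}(\mathbb N)$ under these norms. Since $G_0\subset W_0$ the formal identity $id:\mathfrak X_0\to\mathfrak X_{G_0}$ is bounded; $id|_Y$ is its restriction. *)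

theory Defs
  imports "HOL-Analysis.Analysis"
begin

text \<open>Coordinates are indexed by nat starting at 0 (coordinate l here is coordinate l+1
  of the paper); elements of c00 are finitely supported functions nat => real.\<close>

definition supp :: "(nat \<Rightarrow> real) \<Rightarrow> nat set" where
  "supp x = {n. x n \<noteq> 0}"

definition c00 :: "(nat \<Rightarrow> real) set" where
  "c00 = {x. finite (supp x)}"

definition blk_less :: "(nat \<Rightarrow> real) \<Rightarrow> (nat \<Rightarrow> real) \<Rightarrow> bool" where
  "blk_less x y \<longleftrightarrow> x \<in> c00 \<and> y \<in> c00 \<and> supp x \<noteq> {} \<and> supp y \<noteq> {} \<and> Max (supp x) < Min (supp y)"

definition unitf :: "nat \<Rightarrow> nat \<Rightarrow> real" where
  "unitf k = (\<lambda>n. if n = k then 1 else 0)"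

definition pair :: "(nat \<Rightarrow> real) \<Rightarrow> (nat \<Rightarrow> real) \<Rightarrow> real" where
  "pair f x = (\<Sum>n\<in>supp f. f n * x n)"

fun mseq :: "nat \<Rightarrow> nat" where
  "mseq 0 = 1"
| "mseq (Suc 0) = 2^8"
| "mseq (Suc (Suc j)) = mseq (Suc j) ^ 5"

definition sseq :: "nat \<Rightarrow> nat" where
  "sseq k = (THE t. (2::nat) ^ t = mseq k ^ 4)"

fun nseq :: "nat \<Rightarrow> nat" where
  "nseq 0 = 1"
| "nseq (Suc 0) = 2^7"
| "nseq (Suc (Suc j)) = (2 * nseq (Suc j)) ^ sseq (Suc (Suc j))"

definition avgf :: "nat \<Rightarrow> (nat \<Rightarrow> real) list \<Rightarrow> nat \<Rightarrow> real" where
  "avgf k fs = (\<lambda>n. (\<Sum>f\<leftarrow>fs. f n) / real (mseq k))"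

inductive_set G0 :: "(nat \<Rightarrow> real) set" where
  unit: "unitf k \<in> G0"
| neg: "f \<in> G0 \<Longrightarrow> (\<lambda>n. - f n) \<in> G0"
| avg: "\<lbrakk>j \<ge> 1; fs \<noteq> []; length fs \<le> nseq (2*j); sorted_wrt blk_less fs;
         \<forall>f\<in>set fs. f \<in> G0\<rbrakk> \<Longrightarrow> avgf (2*j) fs \<in> G0"
| comb: "\<lbrakk>ps \<noteq> [];
          \<forall>(a, j, f)\<in>set ps. a \<in> \<rat> \<and> f \<in> G0 \<and>
             (\<exists>gs. j \<ge> 1 \<and> gs \<noteq> [] \<and> length gs \<le> nseq (2*j) \<and> sorted_wrt blk_less gs \<and>
                   (\<forall>g\<in>set gs. g \<in> G0) \<and> f = avgf (2*j) gs);
          distinct (map (\<lambda>(a, j, f). j) ps);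
          (\<Sum>(a, j, f)\<leftarrow>ps. a^2) \<le> 1\<rbrakk>
         \<Longrightarrow> (\<lambda>n. \<Sum>(a, j, f)\<leftarrow>ps. a * f n) \<in> G0"

definition has_weight :: "(nat \<Rightarrow> real) \<Rightarrow> nat \<Rightarrow> bool" where
  "has_weight f w \<longleftrightarrow> (\<exists>j gs. j \<ge> 1 \<and> w = mseq (2*j) \<and> gs \<noteq> [] \<and> length gs \<le> nseq (2*j) \<and>
       sorted_wrt blk_less gs \<and> set gs \<subseteq> G0 \<and> f = avgf (2*j) gs)"

definition Qs :: "(nat \<Rightarrow> real) list set" where
  "Qs = {fs. fs \<noteq> [] \<and> set fs \<subseteq> G0 \<and> (\<forall>f\<in>set fs. supp f \<noteq> {}) \<and> sorted_wrt blk_less fs}"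

text \<open>Admissible coding function; the +1 converts our 0-based coordinates to the paper's.\<close>
definition admissible_sigma :: "nat set \<Rightarrow> ((nat \<Rightarrow> real) list \<Rightarrow> nat) \<Rightarrow> bool" where
  "admissible_sigma \<Omega>2 \<sigma> \<longleftrightarrow> inj_on \<sigma> Qs \<and> (\<forall>fs\<in>Qs. \<sigma> fs \<in> {2*j | j. j \<in> \<Omega>2}) \<and>
     (\<forall>fs\<in>Qs. real (mseq (\<sigma> fs)) >
        Max {1 / \<bar>f l\<bar> | f l. f \<in> set fs \<and> l \<in> supp f} * real (Max (supp (last fs)) + 1))"

definition special_seq :: "((nat \<Rightarrow> real) list \<Rightarrow> nat) \<Rightarrow> nat set \<Rightarrow> nat \<Rightarrow> (nat \<Rightarrow> real) list \<Rightarrow> bool" where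
  "special_seq \<sigma> \<Omega>1 j fs \<longleftrightarrow> fs \<in> Qs \<and> length fs = nseq (2*j+1) \<and>
     (\<exists>j1\<in>\<Omega>1. has_weight (fs!0) (mseq (2*j1)) \<and> nseq (2*j+1)^2 < mseq (2*j1)) \<and>
     (\<forall>i. 1 \<le> i \<and> i < length fs \<longrightarrow> has_weight (fs!i) (mseq (\<sigma> (take i fs))))"

definition restr :: "nat set \<Rightarrow> (nat \<Rightarrow> real) \<Rightarrow> nat \<Rightarrow> real" where
  "restr E f = (\<lambda>n. if n \<in> E then f n else 0)"

definition W0 :: "((nat \<Rightarrow> real) list \<Rightarrow> nat) \<Rightarrow> nat set \<Rightarrow> (nat \<Rightarrow> real) set" where
  "W0 \<sigma> \<Omega>1 = G0 \<union> {(\<lambda>n. \<epsilon> * restr E (avgf (2*j+1) fs) n) | \<epsilon> E j fs.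
        \<bar>\<epsilon>\<bar> = 1 \<and> (\<exists>a b. E = {a..b}) \<and> j \<ge> 1 \<and> special_seq \<sigma> \<Omega>1 j fs}"

definition normG0 :: "(nat \<Rightarrow> real) \<Rightarrow> real" where
  "normG0 x = (SUP f\<in>G0. \<bar>pair f x\<bar>)"

definition normW0 :: "((nat \<Rightarrow> real) list \<Rightarrow> nat) \<Rightarrow> nat set \<Rightarrow> (nat \<Rightarrow> real) \<Rightarrow> real" where
  "normW0 \<sigma> \<Omega>1 x = (SUP f\<in>W0 \<sigma> \<Omega>1. \<bar>pair f x\<bar>)"

definition is_completion :: "((nat \<Rightarrow> real) \<Rightarrow> real) \<Rightarrow> ((nat \<Rightarrow> real) \<Rightarrow> 'a::banach) \<Rightarrow> bool" where
  "is_completion nrm J \<longleftrightarrow>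
     (\<forall>x\<in>c00. \<forall>y\<in>c00. \<forall>a b. J (\<lambda>n. a * x n + b * y n) = a *\<^sub>R J x + b *\<^sub>R J y) \<and>
     (\<forall>x\<in>c00. norm (J x) = nrm x) \<and> closure (J ` c00) = UNIV"

definition c0 :: "(nat \<Rightarrow> real) set" where
  "c0 = {x. x \<longlonglongrightarrow> 0}"

definition supnorm :: "(nat \<Rightarrow> real) \<Rightarrow> real" where
  "supnorm x = (SUP n. \<bar>x n\<bar>)"

definition iso_to_subspace_c0 :: "'a::real_normed_vector set \<Rightarrow> bool" where
  "iso_to_subspace_c0 Y \<longleftrightarrow> (\<exists>U. (\<forall>y\<in>Y. U y \<in> c0) \<and>
     (\<forall>y\<in>Y. \<forall>z\<in>Y. \<forall>a b. U (a *\<^sub>R y + b *\<^sub>R z) = (\<lambda>n. a * U y n + b * U z n)) \<and>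
     (\<exists>c C. 0 < c \<and> 0 < C \<and> (\<forall>y\<in>Y. c * norm y \<le> supnorm (U y) \<and> supnorm (U y) \<le> C * norm y)))"

end

theory Submission
  imports Defs "HOL-Library.Diagonal_Subsequence"
begin

text \<open>Let U embed Y isomorphically into c_0. Then every bounded operator T from X_0 to
  X_G0 maps the unit ball of Y onto a relatively compact set. Take y_k in the unit ball of Y and
  b_k in c_00 approximating T y_k, and pass to a subsequence along which all coordinates of
  U y_k and of b_k converge. If (T y_k) were not Cauchy, a gliding hump produces differences
  z_i = y_p - y_q with norm (T z_i) \<ge> e whose U-images and approximants live essentially on
  successive intervals. A sum of K of them has c_0-norm bounded independently of K, hence so
  are its norm and its image under T. On the other hand the averages (f_1 + ... + f_K) / m_2j
  of norming functionals of the blocks lie in G0 as long as K = j m_2j \<le> n_2j, so the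
  approximating block sum has G0-norm at least K e / (4 m_2j) = j e / 4, which is absurd for
  large j. Only the G0 part of the construction enters.\<close>

section \<open>The sequences m_j and n_j\<close>

lemma mseq_ge_power: "2 ^ k \<le> mseq k"
proof (induction k rule: mseq.induct)
  case (3 j)
  have "(2::nat) ^ Suc (Suc j) \<le> (2 ^ Suc j) ^ 5"
    by (simp only: power_mult[symmetric]) (intro power_increasing, auto)
  also have "\<dots> \<le> mseq (Suc j) ^ 5" using 3 by (intro power_mono) auto
  finally show ?case by simp
qed simp_all

lemma mseq_pos: "1 \<le> mseq k"
  using mseq_ge_power[of k] one_le_power[of "2::nat" k] by linarith

lemma le_mseq_double: "j \<le> mseq (2 * j)"
proof -
  have "j \<le> 2 ^ j" by (rule less_imp_le[OF less_exp])
  also have "(2::nat) ^ j \<le> 2 ^ (2 * j)" by (intro power_increasing) auto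
  finally show ?thesis using mseq_ge_power[of "2 * j"] by linarith
qed

lemma mseq_Suc: "mseq (Suc k) = 2 ^ (8 * 5 ^ k)"
  by (induction k) (simp_all add: power_mult[symmetric] mult.commute mult.left_commute)

lemma sseq_Suc: "sseq (Suc k) = 32 * 5 ^ k"
  unfolding sseq_def
proof (rule the_equality)
  show "(2::nat) ^ (32 * 5 ^ k) = mseq (Suc k) ^ 4"
    by (simp add: mseq_Suc power_mult[symmetric])
qed (simp add: mseq_Suc power_mult[symmetric] power_inject_exp)

lemma nseq_pos: "1 \<le> nseq k"
  by (induction k rule: nseq.induct) simp_all

text \<open>Because n_2j \<ge> 2^s_2j = m_2j^4.\<close>
lemma mseq_sq_le_nseq:
  assumes "1 \<le> j"
  shows "mseq (2 * j) ^ 2 \<le> nseq (2 * j)"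
proof -
  obtain i where i: "2 * j = Suc (Suc i)" using assms by (intro that[of "2 * j - 2"]) arith
  have "mseq (2 * j) ^ 2 \<le> mseq (2 * j) ^ 4" using mseq_pos by (intro power_increasing) auto
  also have "\<dots> = 2 ^ sseq (2 * j)"
    unfolding i mseq_Suc sseq_Suc by (simp add: power_mult[symmetric])
  also have "\<dots> \<le> (2 * nseq (Suc i)) ^ sseq (2 * j)"
    using nseq_pos[of "Suc i"] by (intro power_mono) auto
  also have "\<dots> = nseq (2 * j)" unfolding i by simp
  finally show ?thesis .
qed

lemma exists_length_le_nseq_average_gt:
  fixes t A :: real
  assumes "0 < t"
  obtains j K where "1 \<le> j" "1 \<le> K" "K \<le> nseq (2 * j)" "A < K * t / mseq (2 * j)"
proof -
  obtain j :: nat where j: "max 1 (A / t) < j" using reals_Archimedean2 by blast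
  define K where "K = mseq (2 * j) * j"
  have "1 \<le> j" using j by linarith
  moreover have "1 \<le> K" using mseq_pos[of "2 * j"] \<open>1 \<le> j\<close> by (simp add: K_def)
  moreover have "K \<le> nseq (2 * j)"
  proof -
    have "K \<le> mseq (2 * j) ^ 2" using le_mseq_double[of j] by (simp add: K_def power2_eq_square)
    then show ?thesis using mseq_sq_le_nseq[OF \<open>1 \<le> j\<close>] by linarith
  qed
  moreover have "A < K * t / mseq (2 * j)"
    using j assms mseq_pos[of "2 * j"] by (simp add: K_def field_simps)
  ultimately show ?thesis using that by blast
qed

section \<open>The norming set G0\<close>

lemma blk_less_supp_disjoint:
  assumes "blk_less f g"
  shows "supp f \<inter> supp g = {}"
proof -
  have "finite (supp f)" "finite (supp g)" "Max (supp f) < Min (supp g)"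
    using assms by (auto simp: blk_less_def c00_def)
  then have "n < m" if "n \<in> supp f" "m \<in> supp g" for n m
    using that Max_ge[of "supp f" n] Min_le[of "supp g" m] by linarith
  then show ?thesis by blast
qed

lemma abs_sum_list_blocks_le:
  assumes "sorted_wrt blk_less fs" "\<forall>f\<in>set fs. \<bar>f n\<bar> \<le> B" "0 \<le> B"
  shows "\<bar>\<Sum>f\<leftarrow>fs. f n\<bar> \<le> B"
  using assms
proof (induction fs)
  case (Cons f fs)
  show ?case
  proof (cases "f n = 0")
    case False
    then have "\<forall>g\<in>set fs. g n = 0"
      using Cons.prems(1) blk_less_supp_disjoint by (fastforce simp: supp_def)
    then have "(\<Sum>g\<leftarrow>fs. g n) = 0" by (induction fs) auto
    then show ?thesis using Cons.prems by simp
  qed (use Cons in simp)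
qed simp

lemma abs_avgf_le:
  assumes "sorted_wrt blk_less gs" "\<forall>g\<in>set gs. \<bar>g n\<bar> \<le> 1"
  shows "\<bar>avgf k gs n\<bar> \<le> 1 / mseq k"
  using abs_sum_list_blocks_le[OF assms] mseq_pos[of k]
  by (simp add: avgf_def abs_div divide_right_mono)

lemma sum_inverse_powers_two_le_1:
  assumes "finite J" "0 \<notin> J"
  shows "(\<Sum>j\<in>J. (1/2::real) ^ j) \<le> 1"
proof -
  obtain N where "J \<subseteq> {..<N}" using assms(1) finite_nat_bounded by blast
  have "J \<subseteq> Suc ` {..<N}"
  proof
    fix x assume "x \<in> J"
    then have "x \<noteq> 0" "x < N" using assms(2) \<open>J \<subseteq> {..<N}\<close> by (metis, auto)
    then show "x \<in> Suc ` {..<N}" by (intro image_eqI[of _ _ "x - 1"]) auto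
  qed
  then have "(\<Sum>j\<in>J. (1/2::real) ^ j) \<le> (\<Sum>j\<in>Suc ` {..<N}. (1/2) ^ j)"
    by (intro sum_mono2) auto
  also have "\<dots> = (\<Sum>i<N. (1/2) ^ Suc i)"
    by (subst sum.reindex) auto
  also have "\<dots> = (1/2) * (\<Sum>i<N. (1/2) ^ i)"
    by (simp add: sum_distrib_left)
  also have "\<dots> = 1 - (1/2) ^ N"
    by (simp add: sum_gp_strict)
  also have "\<dots> \<le> 1" by simp
  finally show ?thesis .
qed

text \<open>In a combination of rule comb, |a| \<le> 1 and the weights m_2j \<ge> 2^j are pairwise
  different, so the coordinates are dominated by a geometric series.\<close>
lemma G0_abs_le_1: "f \<in> G0 \<Longrightarrow> \<bar>f n\<bar> \<le> 1"
proof (induction f rule: G0.induct)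
  case (unit k)
  then show ?case by (simp add: unitf_def)
next
  case (neg f)
  then show ?case by simp
next
  case (avg j fs)
  then have "\<bar>avgf (2 * j) fs n\<bar> \<le> 1 / mseq (2 * j)" by (intro abs_avgf_le) auto
  also have "\<dots> \<le> 1" using mseq_pos[of "2 * j"] by simp
  finally show ?case .
next
  case (comb ps)
  have term_le: "\<bar>a * f n\<bar> \<le> (1/2) ^ j" if mem: "(a, j, f) \<in> set ps" for a j f
  proof -
    obtain gs where gs: "1 \<le> j" "sorted_wrt blk_less gs" "\<forall>g\<in>set gs. \<bar>g n\<bar> \<le> 1"
      "f = avgf (2 * j) gs"
      using bspec[OF comb(4) mem] by auto
    have "a\<^sup>2 \<le> (\<Sum>(a, j, f)\<leftarrow>ps. a\<^sup>2)"
      using mem by (intro member_le_sum_list) (force, auto)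
    then have "a\<^sup>2 \<le> 1" using comb(3) by linarith
    then have "\<bar>a\<bar> \<le> 1" by (simp add: abs_square_le_1)
    have "\<bar>f n\<bar> \<le> 1 / mseq (2 * j)" using gs abs_avgf_le by simp
    also have "\<dots> \<le> 1 / 2 ^ (2 * j)"
    proof -
      have "real (2 ^ (2 * j)) \<le> mseq (2 * j)" using mseq_ge_power by (simp only: of_nat_le_iff)
      then show ?thesis using mseq_pos[of "2 * j"] by (intro divide_left_mono) auto
    qed
    also have "\<dots> \<le> (1/2) ^ j"
      by (simp add: power_one_over divide_left_mono power_increasing)
    finally have "\<bar>a\<bar> * \<bar>f n\<bar> \<le> 1 * (1/2) ^ j"
      using \<open>\<bar>a\<bar> \<le> 1\<close> by (intro mult_mono) auto
    then show ?thesis by (simp add: abs_mult)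
  qed
  have "\<bar>\<Sum>(a, j, f)\<leftarrow>ps. a * f n\<bar> \<le> (\<Sum>(a, j, f)\<leftarrow>ps. \<bar>a * f n\<bar>)"
    using sum_list_abs[of "map (\<lambda>(a, j, f). a * f n) ps"] by (simp add: o_def case_prod_unfold)
  also have "\<dots> \<le> (\<Sum>(a, j, f)\<leftarrow>ps. (1/2) ^ j)"
    by (rule sum_list_mono) (use term_le in auto)
  also have "\<dots> = (\<Sum>j\<in>set (map (\<lambda>(a, j, f). j) ps). (1/2) ^ j)"
    using sum_list_distinct_conv_sum_set[OF comb(2), of "\<lambda>j. (1/2::real) ^ j"]
    by (simp add: o_def case_prod_unfold)
  also have "\<dots> \<le> 1"
    using comb(4) by (intro sum_inverse_powers_two_le_1) auto
  finally show ?case .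
qed

lemma supp_restr_subset: "supp (restr E f) \<subseteq> supp f"
  by (auto simp: supp_def restr_def)

lemma blk_less_restr:
  assumes "blk_less f g" "restr E f \<noteq> (\<lambda>_. 0)" "restr E g \<noteq> (\<lambda>_. 0)"
  shows "blk_less (restr E f) (restr E g)"
proof -
  have fin: "finite (supp f)" "finite (supp g)" using assms(1) by (auto simp: blk_less_def c00_def)
  have ne: "supp (restr E f) \<noteq> {}" "supp (restr E g) \<noteq> {}"
    using assms(2,3) by (auto simp: supp_def)
  have "Max (supp (restr E f)) \<le> Max (supp f)" "Min (supp g) \<le> Min (supp (restr E g))"
    using Max_mono[OF supp_restr_subset ne(1) fin(1)] Min_antimono[OF supp_restr_subset ne(2) fin(2)] .
  moreover have "Max (supp f) < Min (supp g)" using assms(1) by (simp add: blk_less_def)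
  ultimately have "Max (supp (restr E f)) < Min (supp (restr E g))" by linarith
  moreover have "finite (supp (restr E f))" "finite (supp (restr E g))"
    using fin supp_restr_subset by (blast intro: finite_subset)+
  ultimately show ?thesis using ne unfolding blk_less_def c00_def by blast
qed

abbreviation restr_nonzero :: "nat set \<Rightarrow> (nat \<Rightarrow> real) list \<Rightarrow> (nat \<Rightarrow> real) list" where
  "restr_nonzero E fs \<equiv> filter (\<lambda>g. g \<noteq> (\<lambda>_. 0)) (map (restr E) fs)"

lemma sorted_blk_less_restr_nonzero:
  "sorted_wrt blk_less fs \<Longrightarrow> sorted_wrt blk_less (restr_nonzero E fs)"
proof (induction fs)
  case (Cons f fs)
  have "blk_less (restr E f) g" if nz: "restr E f \<noteq> (\<lambda>_. 0)" and g: "g \<in> set (restr_nonzero E fs)" for g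
  proof -
    obtain h where "h \<in> set fs" "g = restr E h" "g \<noteq> (\<lambda>_. 0)" using g by auto
    then show ?thesis using Cons.prems nz blk_less_restr by auto
  qed
  then show ?case using Cons by auto
qed simp

lemma sum_list_filter_eq:
  fixes F :: "'a \<Rightarrow> 'b::comm_monoid_add"
  shows "(\<forall>x\<in>set xs. \<not> P x \<longrightarrow> F x = 0) \<Longrightarrow> (\<Sum>x\<leftarrow>filter P xs. F x) = (\<Sum>x\<leftarrow>xs. F x)"
  by (induction xs) auto

lemma sum_list_filter_le:
  fixes F :: "'a \<Rightarrow> 'b::ordered_comm_monoid_add"
  shows "(\<forall>x\<in>set xs. 0 \<le> F x) \<Longrightarrow> (\<Sum>x\<leftarrow>filter P xs. F x) \<le> (\<Sum>x\<leftarrow>xs. F x)"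
proof (induction xs)
  case (Cons x xs)
  then show ?case by (auto intro: add_increasing add_left_mono)
qed simp

lemma sum_list_map_restr:
  "(\<Sum>g\<leftarrow>map (restr E) fs. g n) = (if n \<in> E then (\<Sum>f\<leftarrow>fs. f n) else 0)"
  by (induction fs) (simp_all add: restr_def)

lemma restr_avgf: "restr E (avgf k fs) = avgf k (restr_nonzero E fs)"
proof
  fix n
  have "(\<Sum>g\<leftarrow>restr_nonzero E fs. g n) = (\<Sum>g\<leftarrow>map (restr E) fs. g n)"
    by (rule sum_list_filter_eq) auto
  also have "\<dots> = (if n \<in> E then (\<Sum>f\<leftarrow>fs. f n) else 0)"
    by (rule sum_list_map_restr)
  finally show "restr E (avgf k fs) n = avgf k (restr_nonzero E fs) n"
    by (simp add: avgf_def restr_def)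
qed

lemma restr_avgf_cases:
  assumes "1 \<le> j" "length fs \<le> nseq (2 * j)" "sorted_wrt blk_less fs"
    "\<forall>f\<in>set fs. restr E f = (\<lambda>_. 0) \<or> restr E f \<in> G0"
  obtains "restr E (avgf (2 * j) fs) = (\<lambda>_. 0)"
  | gs where "gs \<noteq> []" "length gs \<le> nseq (2 * j)" "sorted_wrt blk_less gs" "set gs \<subseteq> G0"
      "restr E (avgf (2 * j) fs) = avgf (2 * j) gs"
proof (cases "restr_nonzero E fs = []")
  case True
  have "restr E (avgf (2 * j) fs) = (\<lambda>_. 0)" unfolding restr_avgf True by (simp add: avgf_def)
  then show ?thesis by (rule that(1))
next
  case False
  have "length (restr_nonzero E fs) \<le> nseq (2 * j)"
    using length_filter_le[of _ "map (restr E) fs"] assms(2) by (metis length_map order_trans)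
  moreover have "set (restr_nonzero E fs) \<subseteq> G0" using assms(4) by auto
  ultimately show ?thesis
    using that(2) False sorted_blk_less_restr_nonzero[OF assms(3)] restr_avgf by blast
qed

lemma G0_restr: "f \<in> G0 \<Longrightarrow> restr E f = (\<lambda>_. 0) \<or> restr E f \<in> G0"
proof (induction f rule: G0.induct)
  case (unit k)
  have "restr E (unitf k) = (if k \<in> E then unitf k else (\<lambda>_. 0))"
    by (auto simp: restr_def unitf_def)
  then show ?case by (auto intro: G0.unit)
next
  case (neg f)
  have "restr E (\<lambda>n. - f n) = (\<lambda>n. - restr E f n)" by (auto simp: restr_def)
  then show ?case using neg.IH by (auto simp: fun_eq_iff intro: G0.neg)
next
  case (avg j fs)
  show ?case
    by (rule restr_avgf_cases[of j fs E]) (use avg in \<open>auto intro: G0.avg\<close>)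
next
  case (comb ps)
  define ps' where "ps' = filter (\<lambda>(a, j, f). f \<noteq> (\<lambda>_. 0)) (map (\<lambda>(a, j, f). (a, j, restr E f)) ps)"
  have restr_eq: "restr E (\<lambda>n. \<Sum>(a, j, f)\<leftarrow>ps. a * f n) = (\<lambda>n. \<Sum>(a, j, f)\<leftarrow>ps'. a * f n)"
  proof
    fix n
    have "(\<Sum>(a, j, f)\<leftarrow>ps'. a * f n) = (\<Sum>(a, j, f)\<leftarrow>ps. a * restr E f n)"
      unfolding ps'_def by (subst sum_list_filter_eq) (auto simp: o_def case_prod_unfold)
    then show "restr E (\<lambda>n. \<Sum>(a, j, f)\<leftarrow>ps. a * f n) n = (\<Sum>(a, j, f)\<leftarrow>ps'. a * f n)"
      by (cases "n \<in> E") (auto simp: restr_def case_prod_unfold)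
  qed
  have "(\<lambda>n. \<Sum>(a, j, f)\<leftarrow>ps'. a * f n) \<in> G0" if "ps' \<noteq> []"
  proof (rule G0.comb[OF that])
    show "\<forall>(a, j, f)\<in>set ps'. a \<in> \<rat> \<and> f \<in> G0 \<and> (\<exists>gs. 1 \<le> j \<and> gs \<noteq> [] \<and> length gs \<le> nseq (2 * j)
        \<and> sorted_wrt blk_less gs \<and> (\<forall>g\<in>set gs. g \<in> G0) \<and> f = avgf (2 * j) gs)"
    proof (clarify)
      fix a j f assume mem: "(a, j, f) \<in> set ps'"
      then obtain f0 where f0: "(a, j, f0) \<in> set ps" "f = restr E f0" "f \<noteq> (\<lambda>_. 0)"
        by (auto simp: ps'_def)
      obtain gs where gs: "a \<in> \<rat>" "1 \<le> j" "length gs \<le> nseq (2 * j)" "sorted_wrt blk_less gs"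
        "\<forall>g\<in>set gs. restr E g = (\<lambda>_. 0) \<or> restr E g \<in> G0" "f0 = avgf (2 * j) gs"
        using bspec[OF comb(4) f0(1)] by auto
      show "a \<in> \<rat> \<and> f \<in> G0 \<and> (\<exists>gs. 1 \<le> j \<and> gs \<noteq> [] \<and> length gs \<le> nseq (2 * j)
          \<and> sorted_wrt blk_less gs \<and> (\<forall>g\<in>set gs. g \<in> G0) \<and> f = avgf (2 * j) gs)"
        by (rule restr_avgf_cases[of j gs E]) (use gs f0(2,3) in \<open>auto intro: G0.avg\<close>)
    qed
    show "distinct (map (\<lambda>(a, j, f). j) ps')"
      unfolding ps'_def using comb(2)
      by (intro distinct_map_filter) (simp add: o_def case_prod_unfold)
    have "(\<Sum>(a, j, f)\<leftarrow>ps'. a\<^sup>2) \<le> (\<Sum>(a, j, f)\<leftarrow>map (\<lambda>(a, j, f). (a, j, restr E f)) ps. a\<^sup>2)"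
      unfolding ps'_def by (rule sum_list_filter_le) auto
    also have "\<dots> = (\<Sum>(a, j, f)\<leftarrow>ps. a\<^sup>2)" by (simp add: o_def case_prod_unfold)
    finally show "(\<Sum>(a, j, f)\<leftarrow>ps'. a\<^sup>2) \<le> 1" using comb(3) by linarith
  qed
  then show ?case using restr_eq by (cases "ps' = []") auto
qed

section \<open>The norm of X_G0\<close>

lemma pair_eq_sum:
  assumes "finite S" "supp f \<subseteq> S"
  shows "pair f x = (\<Sum>n\<in>S. f n * x n)"
  unfolding pair_def using assms by (intro sum.mono_neutral_left) (auto simp: supp_def)

lemma pair_restr:
  assumes "finite (supp f)"
  shows "pair (restr E f) x = pair f (restr E x)"
proof -
  have "pair (restr E f) x = (\<Sum>n\<in>supp f. restr E f n * x n)"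
    using assms supp_restr_subset by (intro pair_eq_sum) auto
  also have "\<dots> = pair f (restr E x)"
    unfolding pair_def by (intro sum.cong) (auto simp: restr_def)
  finally show ?thesis .
qed

lemma pair_uminus: "pair (\<lambda>n. - f n) x = - pair f x"
  by (simp add: pair_def supp_def sum_negf)

lemma abs_pair_G0_le:
  assumes "f \<in> G0" "finite S" "supp x \<subseteq> S"
  shows "\<bar>pair f x\<bar> \<le> (\<Sum>n\<in>S. \<bar>x n\<bar>)"
proof (cases "finite (supp f)")
  case True
  have "\<bar>pair f x\<bar> \<le> (\<Sum>n\<in>S \<union> supp f. \<bar>f n * x n\<bar>)"
    using True assms by (simp add: pair_eq_sum[of "S \<union> supp f"] sum_abs)
  also have "\<dots> \<le> (\<Sum>n\<in>S \<union> supp f. \<bar>x n\<bar>)"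
    using G0_abs_le_1[OF assms(1)] by (intro sum_mono) (simp add: abs_mult mult_left_le_one_le)
  also have "\<dots> = (\<Sum>n\<in>S. \<bar>x n\<bar>)"
    using True assms by (intro sum.mono_neutral_right) (auto simp: supp_def)
  finally show ?thesis .
qed (simp add: pair_def sum_nonneg)

lemma bdd_above_abs_pair_G0: "x \<in> c00 \<Longrightarrow> bdd_above ((\<lambda>f. \<bar>pair f x\<bar>) ` G0)"
  using abs_pair_G0_le[of _ "supp x" x] by (intro bdd_aboveI2) (auto simp: c00_def)

lemma abs_pair_le_normG0: "x \<in> c00 \<Longrightarrow> f \<in> G0 \<Longrightarrow> \<bar>pair f x\<bar> \<le> normG0 x"
  unfolding normG0_def by (rule cSUP_upper[OF _ bdd_above_abs_pair_G0])

lemma normG0_le_sum_abs: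
  assumes "finite S" "supp x \<subseteq> S"
  shows "normG0 x \<le> (\<Sum>n\<in>S. \<bar>x n\<bar>)"
  unfolding normG0_def using G0.unit abs_pair_G0_le[OF _ assms] by (intro cSUP_least) auto

lemma abs_le_normG0:
  assumes "x \<in> c00"
  shows "\<bar>x n\<bar> \<le> normG0 x"
proof -
  have "pair (unitf n) x = x n"
    by (subst pair_eq_sum[of "{n}"]) (auto simp: supp_def unitf_def)
  then show ?thesis using abs_pair_le_normG0[OF assms G0.unit[of n]] by simp
qed

text \<open>G0 is symmetric, so no absolute value is needed.\<close>
lemma less_normG0_imp_pair:
  assumes "x \<in> c00" "t < normG0 x"
  obtains f where "f \<in> G0" "t < pair f x"
proof -
  obtain f where f: "f \<in> G0" "t < \<bar>pair f x\<bar>"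
    using assms(2) less_cSUP_iff[OF _ bdd_above_abs_pair_G0[OF assms(1)]] G0.unit
    unfolding normG0_def by blast
  show ?thesis
  proof (cases "0 \<le> pair f x")
    case True
    then show ?thesis using f that by simp
  next
    case False
    then show ?thesis using f that[OF G0.neg[OF f(1)]] by (simp add: pair_uminus)
  qed
qed

lemma pair_avgf:
  assumes "finite S" "\<forall>g\<in>set gs. supp g \<subseteq> S"
  shows "pair (avgf k gs) x = (\<Sum>g\<leftarrow>gs. pair g x) / mseq k"
proof -
  have "supp (avgf k gs) \<subseteq> S"
  proof
    fix n assume n: "n \<in> supp (avgf k gs)"
    have "(\<Sum>g\<leftarrow>gs. g n) = 0" if "n \<notin> S"
      using assms(2) that by (induction gs) (auto simp: supp_def)
    then show "n \<in> S" using n by (auto simp: supp_def avgf_def)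
  qed
  then have "pair (avgf k gs) x = (\<Sum>n\<in>S. (\<Sum>g\<leftarrow>gs. g n) * x n) / mseq k"
    using pair_eq_sum[OF assms(1)] by (simp add: avgf_def sum_divide_distrib)
  also have "(\<Sum>n\<in>S. (\<Sum>g\<leftarrow>gs. g n) * x n) = (\<Sum>g\<leftarrow>gs. pair g x)"
    using assms(2)
    by (induction gs) (simp_all add: sum.distrib distrib_right pair_eq_sum[OF assms(1)])
  finally show ?thesis .
qed

lemma c00_lincomb: "x \<in> c00 \<Longrightarrow> y \<in> c00 \<Longrightarrow> (\<lambda>n. a * x n + b * y n) \<in> c00"
proof -
  assume "x \<in> c00" "y \<in> c00"
  moreover have "supp (\<lambda>n. a * x n + b * y n) \<subseteq> supp x \<union> supp y" by (auto simp: supp_def)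
  ultimately show ?thesis by (auto simp: c00_def intro: finite_subset)
qed

lemma c00_diff: "x \<in> c00 \<Longrightarrow> y \<in> c00 \<Longrightarrow> (\<lambda>n. x n - y n) \<in> c00"
  using c00_lincomb[of x y 1 "-1"] by simp

lemma c00_sum: "finite F \<Longrightarrow> (\<And>i. i \<in> F \<Longrightarrow> w i \<in> c00) \<Longrightarrow> (\<lambda>n. \<Sum>i\<in>F. w i n) \<in> c00"
proof (induction F rule: finite_induct)
  case empty
  then show ?case by (simp add: c00_def supp_def)
next
  case (insert i F)
  then show ?case using c00_lincomb[of "w i" "\<lambda>n. \<Sum>i\<in>F. w i n" 1 1] by simp
qed

lemma c00_restr: "x \<in> c00 \<Longrightarrow> restr E x \<in> c00"
  using supp_restr_subset by (auto simp: c00_def intro: finite_subset)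

lemma abs_le_supnorm:
  assumes "x \<in> c0"
  shows "\<bar>x n\<bar> \<le> supnorm x"
proof -
  have "Bseq x" using assms by (auto simp: c0_def intro: convergent_imp_Bseq convergentI)
  then obtain K where "\<And>n. norm (x n) \<le> K" using BseqE by metis
  then have "bdd_above (range (\<lambda>n. \<bar>x n\<bar>))" by (intro bdd_aboveI2) auto
  then show ?thesis unfolding supnorm_def by (rule cSUP_upper[OF UNIV_I])
qed

lemma supnorm_le: "(\<And>n. \<bar>x n\<bar> \<le> B) \<Longrightarrow> supnorm x \<le> B"
  unfolding supnorm_def by (rule cSUP_least) auto

lemma normG0_le_of_small_initial_coords:
  assumes "supp w \<subseteq> {..<l}" "\<And>n. n < l \<Longrightarrow> \<bar>w n\<bar> \<le> \<epsilon> / (real l + 1)" "0 \<le> \<epsilon>"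
  shows "normG0 w \<le> \<epsilon>"
proof -
  have "normG0 w \<le> (\<Sum>n<l. \<bar>w n\<bar>)" using assms(1) by (rule normG0_le_sum_abs[rotated]) simp
  also have "\<dots> \<le> l * (\<epsilon> / (real l + 1))" using sum_mono[of "{..<l}", OF assms(2)] by simp
  also have "\<dots> \<le> \<epsilon>" using assms(3) by (simp add: field_simps)
  finally show ?thesis .
qed

lemma interval_blocks_disjoint:
  assumes "mono L" "n \<in> {L i..<L (Suc i)}" "n \<in> {L i'..<L (Suc i')}"
  shows "i = i'"
proof (rule ccontr)
  assume "i \<noteq> i'"
  then have "L (Suc i) \<le> L i' \<or> L (Suc i') \<le> L i"
    using monoD[OF assms(1)] by (metis not_less_eq_eq linorder_neqE_nat Suc_leI)
  then show False using assms(2,3) by auto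
qed

text \<open>A coordinate meets at most one of the intervals, where a term can be large.\<close>
lemma abs_sum_interval_blocks_le:
  fixes w :: "nat \<Rightarrow> nat \<Rightarrow> real"
  assumes "mono L" "\<And>i. \<bar>w i n\<bar> \<le> B" "\<And>i. n \<notin> {L i..<L (Suc i)} \<Longrightarrow> \<bar>w i n\<bar> \<le> \<epsilon>" "0 \<le> \<epsilon>"
  shows "\<bar>\<Sum>i<K. w i n\<bar> \<le> B + real K * \<epsilon>"
proof -
  define A where "A = {i\<in>{..<K}. n \<in> {L i..<L (Suc i)}}"
  have "card A \<le> 1"
    unfolding A_def using interval_blocks_disjoint[OF assms(1)]
    by (subst One_nat_def, subst card_le_Suc0_iff_eq) auto
  have A_sub: "A \<subseteq> {..<K}" unfolding A_def by blast
  have "0 \<le> B" using assms(2)[of 0] by linarith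
  have "\<bar>\<Sum>i<K. w i n\<bar> \<le> (\<Sum>i<K. \<bar>w i n\<bar>)" by (rule sum_abs)
  also have "\<dots> = (\<Sum>i\<in>A. \<bar>w i n\<bar>) + (\<Sum>i\<in>{..<K} - A. \<bar>w i n\<bar>)"
    using sum.subset_diff[OF A_sub finite_lessThan, of "\<lambda>i. \<bar>w i n\<bar>"] by (simp add: add.commute)
  also have "\<dots> \<le> real (card A) * B + real (card ({..<K} - A)) * \<epsilon>"
    using sum_mono[of A, OF assms(2)] sum_mono[of "{..<K} - A", OF assms(3)]
    by (intro add_mono) (auto simp: A_def)
  also have "\<dots> \<le> B + real K * \<epsilon>"
  proof (intro add_mono)
    show "real (card A) * B \<le> B" using \<open>card A \<le> 1\<close> \<open>0 \<le> B\<close> by (simp add: mult_left_le_one_le)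
    have "card ({..<K} - A) \<le> K" using card_mono[of "{..<K}" "{..<K} - A"] by auto
    then show "real (card ({..<K} - A)) * \<epsilon> \<le> real K * \<epsilon>" using assms(4) by (intro mult_right_mono) auto
  qed
  finally show ?thesis .
qed

lemma restr_interval_sum_blocks:
  assumes "mono L" "i < K" "\<And>i. i < K \<Longrightarrow> supp (v i) \<subseteq> {L i..<L (Suc i)}"
  shows "restr {L i..<L (Suc i)} (\<lambda>n. \<Sum>i'<K. v i' n) = v i"
proof
  fix n
  have "v i' n = 0" if "i' < K" "i' \<noteq> i" "n \<in> {L i..<L (Suc i)}" for i'
    using assms(3)[OF that(1)] interval_blocks_disjoint[OF assms(1) that(3)] that(2)
    by (auto simp: supp_def)
  moreover have "v i n = 0" if "n \<notin> {L i..<L (Suc i)}"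
    using assms(3)[OF assms(2)] that by (auto simp: supp_def)
  ultimately show "restr {L i..<L (Suc i)} (\<lambda>n. \<Sum>i'<K. v i' n) n = v i n"
    using assms(2) by (auto simp: restr_def sum.remove[of "{..<K}" i])
qed

lemma sorted_blk_less_interval_blocks:
  assumes "mono L" "\<And>i. i < K \<Longrightarrow> supp (g i) \<noteq> {}" "\<And>i. i < K \<Longrightarrow> supp (g i) \<subseteq> {L i..<L (Suc i)}"
  shows "sorted_wrt blk_less (map g [0..<K])"
proof -
  have "blk_less (g i) (g i')" if "i < i'" "i' < K" for i i'
  proof -
    have iK: "i < K" using that by linarith
    have fin: "finite (supp (g i))" "finite (supp (g i'))"
      using assms(3)[OF iK] assms(3)[OF that(2)] by (auto intro: finite_subset)
    have "Max (supp (g i)) < L (Suc i)"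
      using Max_in[OF fin(1) assms(2)[OF iK]] assms(3)[OF iK] by auto
    also have "L (Suc i) \<le> L i'" using monoD[OF assms(1)] that by simp
    also have "L i' \<le> Min (supp (g i'))"
      using Min_in[OF fin(2) assms(2)[OF that(2)]] assms(3)[OF that(2)] by auto
    finally show ?thesis using fin assms(2)[OF iK] assms(2)[OF that(2)] by (simp add: blk_less_def c00_def)
  qed
  then show ?thesis by (auto simp: sorted_wrt_map sorted_wrt_iff_nth_less)
qed

lemma G0_witness_in_block:
  assumes "v \<in> c00" "supp v \<subseteq> E" "0 \<le> t" "t < normG0 v"
  obtains g where "g \<in> G0" "supp g \<subseteq> E" "supp g \<noteq> {}" "finite (supp g)" "t < pair g v"
proof -
  obtain f where f: "f \<in> G0" "t < pair f v" using less_normG0_imp_pair[OF assms(1,4)] .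
  have fin: "finite (supp f)"
  proof (rule ccontr)
    assume "infinite (supp f)"
    then show False using f(2) assms(3) by (simp add: pair_def)
  qed
  have "restr E v = v" using assms(2) by (intro ext) (auto simp: restr_def supp_def)
  then have pg: "t < pair (restr E f) v" using f(2) pair_restr[OF fin] by simp
  then have nz: "restr E f \<noteq> (\<lambda>_. 0)" using assms(3) by (auto simp: pair_def)
  show ?thesis
  proof (rule that[OF _ _ _ _ pg])
    show "restr E f \<in> G0" using G0_restr[OF f(1)] nz by blast
    show "supp (restr E f) \<subseteq> E" by (auto simp: supp_def restr_def)
    show "supp (restr E f) \<noteq> {}" using nz by (auto simp: supp_def)
    show "finite (supp (restr E f))" using fin supp_restr_subset by (rule finite_subset[rotated])
  qed
qed

text \<open>Average the norming functionals of the blocks with weight m_2j.\<close>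
lemma normG0_sum_blocks_ge:
  fixes v :: "nat \<Rightarrow> nat \<Rightarrow> real" and t :: real
  assumes "mono L" "1 \<le> j" "K \<le> nseq (2 * j)" "0 \<le> t"
    and "\<And>i. i < K \<Longrightarrow> v i \<in> c00" "\<And>i. i < K \<Longrightarrow> supp (v i) \<subseteq> {L i..<L (Suc i)}"
    and "\<And>i. i < K \<Longrightarrow> t < normG0 (v i)"
  shows "real K * t / mseq (2 * j) \<le> normG0 (\<lambda>n. \<Sum>i<K. v i n)"
proof (cases "K = 0")
  case True
  then show ?thesis using abs_le_normG0[of "\<lambda>_. 0"] by (simp add: c00_def supp_def)
next
  case False
  define V where "V = (\<lambda>n. \<Sum>i<K. v i n)"
  have "\<exists>g. g \<in> G0 \<and> supp g \<subseteq> {L i..<L (Suc i)} \<and> supp g \<noteq> {} \<and> t < pair g (v i)"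
    if "i < K" for i
    by (rule G0_witness_in_block[OF assms(5)[OF that] assms(6)[OF that] assms(4) assms(7)[OF that]])
      blast
  then obtain g where g: "\<And>i. i < K \<Longrightarrow> g i \<in> G0 \<and> supp (g i) \<subseteq> {L i..<L (Suc i)}
      \<and> supp (g i) \<noteq> {} \<and> t < pair (g i) (v i)"
    by metis
  have pair_g_V: "pair (g i) V = pair (g i) (v i)" if "i < K" for i
  proof -
    have "finite (supp (g i))" using g[OF that] by (meson finite_atLeastLessThan finite_subset)
    moreover have "restr {L i..<L (Suc i)} (g i) = g i"
      using g[OF that] by (intro ext) (auto simp: restr_def supp_def)
    ultimately show ?thesis
      using pair_restr[of "g i" "{L i..<L (Suc i)}" V] restr_interval_sum_blocks[OF assms(1) that assms(6)]
      by (simp add: V_def)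
  qed
  define F where "F = avgf (2 * j) (map g [0..<K])"
  have "F \<in> G0"
    unfolding F_def using False g assms(1-3)
    by (intro G0.avg sorted_blk_less_interval_blocks) auto
  have "pair F V = (\<Sum>i<K. pair (g i) V) / mseq (2 * j)"
  proof -
    have "supp (g i) \<subseteq> {..<L K}" if "i < K" for i
      using g[OF that] monoD[OF assms(1), of "Suc i" K] that by auto
    then have "\<forall>h\<in>set (map g [0..<K]). supp h \<subseteq> {..<L K}" by auto
    then show ?thesis
      unfolding F_def by (simp add: pair_avgf[of "{..<L K}"] sum_list_sum_nth atLeast0LessThan)
  qed
  moreover have "(\<Sum>i<K. t) \<le> (\<Sum>i<K. pair (g i) V)"
    using g pair_g_V by (intro sum_mono) (simp add: less_imp_le)
  then have "K * t \<le> (\<Sum>i<K. pair (g i) V)" by simp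
  ultimately have "K * t / mseq (2 * j) \<le> pair F V"
    by (simp add: divide_right_mono)
  also have "\<dots> \<le> normG0 V"
  proof -
    have "V \<in> c00" unfolding V_def using assms(5) by (intro c00_sum) auto
    then show ?thesis by (rule order_trans[OF abs_ge_self abs_pair_le_normG0[OF _ \<open>F \<in> G0\<close>]])
  qed
  finally show ?thesis unfolding V_def .
qed

section \<open>Subsequences and gliding humps\<close>

lemma not_compact_closure_obtains_no_Cauchy_subseq:
  fixes S :: "'a::complete_space set"
  assumes "\<not> compact (closure S)"
  obtains \<sigma> :: "nat \<Rightarrow> 'a" where "range \<sigma> \<subseteq> S" "\<And>r. strict_mono r \<Longrightarrow> \<not> Cauchy (\<sigma> \<circ> r)"
proof -
  have "\<not> Met_TC.mtotally_bounded S"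
    using assms Met_TC.mtotally_bounded_eq_compact_closure_of[of S] complete_UNIV by simp
  then have "\<exists>\<sigma> :: nat \<Rightarrow> 'a. range \<sigma> \<subseteq> S \<and> (\<forall>r. strict_mono r \<longrightarrow> \<not> Cauchy (\<sigma> \<circ> r))"
    using Met_TC.mtotally_bounded_sequentially[of S]
    by (simp only: MCauchy_iff_Cauchy subset_UNIV simp_thms) blast
  then show ?thesis using that by auto
qed

lemma dense_image_obtains_approximations:
  fixes f :: "'c \<Rightarrow> 'b::metric_space" and x :: "nat \<Rightarrow> 'b"
  assumes "closure (f ` S) = UNIV"
  obtains b where "\<And>k. b k \<in> S" "\<And>k. dist (f (b k)) (x k) < 1 / real (Suc k)"
proof -
  have "\<exists>s\<in>S. dist (f s) (x k) < 1 / real (Suc k)" for k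
  proof -
    have "x k \<in> closure (f ` S)" "0 < 1 / real (Suc k)" using assms by simp_all
    then obtain u where "u \<in> f ` S" "dist u (x k) < 1 / real (Suc k)"
      using closure_approachable[of "x k" "f ` S"] by blast
    then show ?thesis by blast
  qed
  then have "\<forall>k. \<exists>s. s \<in> S \<and> dist (f s) (x k) < 1 / real (Suc k)" by blast
  from choice[OF this] obtain b where "\<forall>k. b k \<in> S \<and> dist (f (b k)) (x k) < 1 / real (Suc k)" ..
  then show ?thesis using that by blast
qed

lemma convergent_coordinates_subseq:
  fixes x :: "nat \<Rightarrow> nat \<Rightarrow> real"
  assumes "\<And>k n. \<bar>x k n\<bar> \<le> M n"
  obtains r where "strict_mono r" "\<And>n. convergent (\<lambda>k. x (r k) n)"
proof -
  interpret subseqs "\<lambda>n s. convergent (\<lambda>k. x (s k) n)"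
  proof
    fix n and s :: "nat \<Rightarrow> nat"
    have "bounded (range (\<lambda>k. x (s k) n))"
      using assms by (auto simp: bounded_iff)
    then obtain l r where "strict_mono r" "((\<lambda>k. x (s k) n) \<circ> r) \<longlonglongrightarrow> l"
      using bounded_imp_convergent_subsequence by blast
    then show "\<exists>r. strict_mono r \<and> convergent (\<lambda>k. x ((s \<circ> r) k) n)"
      by (auto simp: convergent_def o_def)
  qed
  have "convergent (\<lambda>k. x (diagseq k) n)" for n
  proof -
    have "convergent (\<lambda>k. x ((diagseq \<circ> (+) (Suc n)) k) n)"
    proof (rule diagseq_holds)
      fix r s :: "nat \<Rightarrow> nat" and m assume "strict_mono r" "convergent (\<lambda>k. x (s k) m)"
      then show "convergent (\<lambda>k. x ((s \<circ> r) k) m)"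
        using convergent_subseq_convergent[of "\<lambda>k. x (s k) m" r] by (simp add: o_def)
    qed
    then have "convergent (\<lambda>k. x (diagseq (k + Suc n)) n)" by (simp add: o_def add.commute)
    then show ?thesis by (rule iffD1[OF convergent_ignore_initial_segment])
  qed
  then show ?thesis using that[OF subseq_diagseq] by blast
qed

lemma convergent_coordinates_subseq2:
  fixes x x' :: "nat \<Rightarrow> nat \<Rightarrow> real"
  assumes "\<And>k n. \<bar>x k n\<bar> \<le> M n" "\<And>k n. \<bar>x' k n\<bar> \<le> M' n"
  obtains r where "strict_mono r" "\<And>n. convergent (\<lambda>k. x (r k) n)" "\<And>n. convergent (\<lambda>k. x' (r k) n)"
proof -
  obtain r1 where r1: "strict_mono r1" "\<And>n. convergent (\<lambda>k. x (r1 k) n)"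
    by (rule convergent_coordinates_subseq[of x M, OF assms(1)]) blast
  obtain r2 where r2: "strict_mono r2" "\<And>n. convergent (\<lambda>k. x' (r1 (r2 k)) n)"
    by (rule convergent_coordinates_subseq[of "\<lambda>k. x' (r1 k)" M', OF assms(2)]) blast
  show ?thesis
  proof (rule that)
    show "strict_mono (r1 \<circ> r2)" using r1(1) r2(1) by (rule strict_mono_o)
    show "convergent (\<lambda>k. x ((r1 \<circ> r2) k) n)" for n
      using convergent_subseq_convergent[OF r1(2) r2(1)] by (simp add: o_def)
    show "convergent (\<lambda>k. x' ((r1 \<circ> r2) k) n)" for n using r2(2) by simp
  qed
qed

lemma abs_diff_le_of_close:
  fixes x y l e :: real
  assumes "\<bar>x - l\<bar> < e/2" "\<bar>y - l\<bar> < e/2"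
  shows "\<bar>x - y\<bar> \<le> e"
proof -
  have "\<bar>x - y\<bar> \<le> \<bar>x - l\<bar> + \<bar>y - l\<bar>" using abs_triangle_ineq4[of "x - l" "y - l"] by simp
  then show ?thesis using assms by linarith
qed

lemma gliding_hump_step:
  fixes a b :: "nat \<Rightarrow> nat \<Rightarrow> real"
  assumes "\<And>k. a k \<in> c0" "\<And>k. b k \<in> c00"
    and "\<And>n. convergent (\<lambda>k. a k n)" "\<And>n. convergent (\<lambda>k. b k n)"
    and "\<And>N. \<exists>p q. N \<le> p \<and> N \<le> q \<and> P p q" and "0 < \<epsilon>" "0 < \<delta>"
  obtains p q R where "N \<le> p" "N \<le> q" "P p q" "L < R"
    "\<And>n. n < L \<Longrightarrow> \<bar>a p n - a q n\<bar> \<le> \<epsilon> \<and> \<bar>b p n - b q n\<bar> \<le> \<delta>"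
    "\<And>n. R \<le> n \<Longrightarrow> \<bar>a p n - a q n\<bar> \<le> \<epsilon> \<and> b p n = 0 \<and> b q n = 0"
proof -
  define la where "la n = lim (\<lambda>k. a k n)" for n
  define lb where "lb n = lim (\<lambda>k. b k n)" for n
  have "\<forall>\<^sub>F k in sequentially. \<bar>a k n - la n\<bar> < \<epsilon>/2 \<and> \<bar>b k n - lb n\<bar> < \<delta>/2" for n
  proof -
    have "(\<lambda>k. a k n) \<longlonglongrightarrow> la n" "(\<lambda>k. b k n) \<longlonglongrightarrow> lb n"
      using assms(3,4) unfolding la_def lb_def by (simp_all add: convergent_LIMSEQ_iff)
    then show ?thesis
      using tendstoD[of "\<lambda>k. a k n" _ _ "\<epsilon>/2"] tendstoD[of "\<lambda>k. b k n" _ _ "\<delta>/2"] assms(6,7)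
      by (intro eventually_conj) (simp_all add: dist_real_def)
  qed
  then have "\<forall>\<^sub>F k in sequentially. \<forall>n\<in>{..<L}. \<bar>a k n - la n\<bar> < \<epsilon>/2 \<and> \<bar>b k n - lb n\<bar> < \<delta>/2"
    by (intro eventually_ball_finite) auto
  then obtain M where M: "\<And>k n. M \<le> k \<Longrightarrow> n < L \<Longrightarrow> \<bar>a k n - la n\<bar> < \<epsilon>/2 \<and> \<bar>b k n - lb n\<bar> < \<delta>/2"
    unfolding eventually_sequentially by auto
  obtain p q where pq: "max N M \<le> p" "max N M \<le> q" "P p q" using assms(5) by blast
  have "\<forall>\<^sub>F n in sequentially. \<bar>a p n\<bar> < \<epsilon>/2 \<and> \<bar>a q n\<bar> < \<epsilon>/2"
    using assms(1)[of p] assms(1)[of q] assms(6) tendstoD[of "a p" 0 _ "\<epsilon>/2"] tendstoD[of "a q" 0 _ "\<epsilon>/2"]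
    unfolding c0_def by (intro eventually_conj) (simp_all add: dist_real_def)
  moreover have "finite (supp (b p) \<union> supp (b q))" using assms(2) by (simp add: c00_def)
  then obtain R0 where "supp (b p) \<union> supp (b q) \<subseteq> {..<R0}" using finite_nat_bounded by blast
  then have "\<forall>\<^sub>F n in sequentially. b p n = 0 \<and> b q n = 0"
    unfolding eventually_sequentially by (intro exI[of _ R0]) (auto simp: supp_def)
  ultimately have "\<forall>\<^sub>F n in sequentially. (\<bar>a p n\<bar> < \<epsilon>/2 \<and> \<bar>a q n\<bar> < \<epsilon>/2) \<and> b p n = 0 \<and> b q n = 0"
    by (rule eventually_conj)
  then obtain R where R: "\<And>n. R \<le> n \<Longrightarrow> (\<bar>a p n\<bar> < \<epsilon>/2 \<and> \<bar>a q n\<bar> < \<epsilon>/2) \<and> b p n = 0 \<and> b q n = 0"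
    unfolding eventually_sequentially by blast
  show ?thesis
  proof (rule that[of p q "max (Suc L) R"])
    show "\<bar>a p n - a q n\<bar> \<le> \<epsilon> \<and> \<bar>b p n - b q n\<bar> \<le> \<delta>" if "n < L" for n
    proof -
      have "\<bar>a p n - la n\<bar> < \<epsilon>/2" "\<bar>a q n - la n\<bar> < \<epsilon>/2" "\<bar>b p n - lb n\<bar> < \<delta>/2" "\<bar>b q n - lb n\<bar> < \<delta>/2"
        using M[of p n] M[of q n] pq that by auto
      then show ?thesis using abs_diff_le_of_close by blast
    qed
    show "\<bar>a p n - a q n\<bar> \<le> \<epsilon> \<and> b p n = 0 \<and> b q n = 0" if "max (Suc L) R \<le> n" for n
      using R[of n] that abs_diff_le_of_close[of "a p n" 0 \<epsilon> "a q n"] by simp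
  qed (use pq in auto)
qed

lemma gliding_hump:
  fixes a b :: "nat \<Rightarrow> nat \<Rightarrow> real" and \<delta> :: "nat \<Rightarrow> real"
  assumes "\<And>k. a k \<in> c0" "\<And>k. b k \<in> c00"
    and "\<And>n. convergent (\<lambda>k. a k n)" "\<And>n. convergent (\<lambda>k. b k n)"
    and "\<And>N. \<exists>p q. N \<le> p \<and> N \<le> q \<and> P p q" and "0 < \<epsilon>" "\<And>l. 0 < \<delta> l"
  obtains L p q where "mono L" "\<And>i. N \<le> p i" "\<And>i. N \<le> q i" "\<And>i. P (p i) (q i)"
    "\<And>i n. n < L i \<Longrightarrow> \<bar>a (p i) n - a (q i) n\<bar> \<le> \<epsilon> \<and> \<bar>b (p i) n - b (q i) n\<bar> \<le> \<delta> (L i)"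
    "\<And>i n. L (Suc i) \<le> n \<Longrightarrow> \<bar>a (p i) n - a (q i) n\<bar> \<le> \<epsilon> \<and> b (p i) n = 0 \<and> b (q i) n = 0"
proof -
  define hump where "hump l p q R \<longleftrightarrow> N \<le> p \<and> N \<le> q \<and> P p q \<and> l < R \<and>
    (\<forall>n<l. \<bar>a p n - a q n\<bar> \<le> \<epsilon> \<and> \<bar>b p n - b q n\<bar> \<le> \<delta> l) \<and>
    (\<forall>n\<ge>R. \<bar>a p n - a q n\<bar> \<le> \<epsilon> \<and> b p n = 0 \<and> b q n = 0)" for l p q R
  have "\<exists>p q R. hump l p q R" for l
  proof -
    obtain p q R where "N \<le> p" "N \<le> q" "P p q" "l < R"
      "\<And>n. n < l \<Longrightarrow> \<bar>a p n - a q n\<bar> \<le> \<epsilon> \<and> \<bar>b p n - b q n\<bar> \<le> \<delta> l"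
      "\<And>n. R \<le> n \<Longrightarrow> \<bar>a p n - a q n\<bar> \<le> \<epsilon> \<and> b p n = 0 \<and> b q n = 0"
      by (rule gliding_hump_step[OF assms(1-6) assms(7), of N l l]) blast
    then show ?thesis unfolding hump_def by blast
  qed
  then obtain pf qf Rf where hump: "\<And>l. hump l (pf l) (qf l) (Rf l)" by metis
  define L where "L i = (Rf ^^ i) 0" for i
  have L_Suc: "L (Suc i) = Rf (L i)" for i by (simp add: L_def)
  have "mono L"
    unfolding mono_iff_le_Suc L_Suc using hump by (auto simp: hump_def less_imp_le)
  then show ?thesis
    using that[of L "\<lambda>i. pf (L i)" "\<lambda>i. qf (L i)"] hump unfolding hump_def L_Suc by auto
qed

section \<open>Operators on subspaces of c_0\<close>

text \<open>U is an isomorphic embedding of Y into c_0, and JG the isometric embedding of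
  (c00, normG0) into X_G0; T plays the role of the formal identity.\<close>
locale c0_embedding_with_G0_map =
  fixes Y :: "'a::real_normed_vector set" and U :: "'a \<Rightarrow> nat \<Rightarrow> real" and c C :: real
    and T :: "'a \<Rightarrow> 'b::banach" and JG :: "(nat \<Rightarrow> real) \<Rightarrow> 'b"
  assumes subspace_Y: "subspace Y"
    and U_lincomb: "\<And>y z a b. y \<in> Y \<Longrightarrow> z \<in> Y \<Longrightarrow> U (a *\<^sub>R y + b *\<^sub>R z) = (\<lambda>n. a * U y n + b * U z n)"
    and U_c0: "\<And>y. y \<in> Y \<Longrightarrow> U y \<in> c0"
    and U_lower: "\<And>y. y \<in> Y \<Longrightarrow> c * norm y \<le> supnorm (U y)"
    and U_upper: "\<And>y. y \<in> Y \<Longrightarrow> supnorm (U y) \<le> C * norm y"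
    and c_pos: "0 < c" and C_nonneg: "0 \<le> C"
    and T: "bounded_linear T"
    and JG_lincomb: "\<And>x x' a b. x \<in> c00 \<Longrightarrow> x' \<in> c00 \<Longrightarrow>
      JG (\<lambda>n. a * x n + b * x' n) = a *\<^sub>R JG x + b *\<^sub>R JG x'"
    and JG_norm: "\<And>x. x \<in> c00 \<Longrightarrow> norm (JG x) = normG0 x"
begin

sublocale T: bounded_linear T by (rule T)

lemma U_diff: "y \<in> Y \<Longrightarrow> z \<in> Y \<Longrightarrow> U (y - z) = (\<lambda>n. U y n - U z n)"
  using U_lincomb[of y z 1 "-1"] by simp

lemma U_sum: "finite F \<Longrightarrow> (\<And>i. i \<in> F \<Longrightarrow> z i \<in> Y) \<Longrightarrow> U (\<Sum>i\<in>F. z i) = (\<lambda>n. \<Sum>i\<in>F. U (z i) n)"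
proof (induction F rule: finite_induct)
  case empty
  then show ?case using U_lincomb[of 0 0 0 0] subspace_0[OF subspace_Y] by simp
next
  case (insert i F)
  then have "(\<Sum>i\<in>F. z i) \<in> Y" by (intro subspace_sum[OF subspace_Y]) auto
  then show ?case using insert U_lincomb[of "z i" "\<Sum>i\<in>F. z i" 1 1] by simp
qed

lemma JG_diff: "x \<in> c00 \<Longrightarrow> x' \<in> c00 \<Longrightarrow> JG (\<lambda>n. x n - x' n) = JG x - JG x'"
  using JG_lincomb[of x x' 1 "-1"] by simp

lemma JG_sum: "finite F \<Longrightarrow> (\<And>i. i \<in> F \<Longrightarrow> x i \<in> c00) \<Longrightarrow> JG (\<lambda>n. \<Sum>i\<in>F. x i n) = (\<Sum>i\<in>F. JG (x i))"
proof (induction F rule: finite_induct)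
  case empty
  have "(\<lambda>_. 0) \<in> c00" by (simp add: c00_def supp_def)
  then show ?case using JG_lincomb[of "\<lambda>_. 0" "\<lambda>_. 0" 0 0] by simp
next
  case (insert i F)
  then have "(\<lambda>n. \<Sum>i\<in>F. x i n) \<in> c00" by (intro c00_sum) auto
  then show ?case using insert JG_lincomb[of "x i" "\<lambda>n. \<Sum>i\<in>F. x i n" 1 1] by simp
qed

lemma abs_U_le: "y \<in> Y \<Longrightarrow> \<bar>U y n\<bar> \<le> C * norm y"
  using abs_le_supnorm[OF U_c0] U_upper order_trans by blast

lemma norm_le_if_abs_U_le: "y \<in> Y \<Longrightarrow> (\<And>n. \<bar>U y n\<bar> \<le> B) \<Longrightarrow> norm y \<le> B / c"
  using U_lower[of y] supnorm_le[of "U y" B] c_pos by (simp add: field_simps)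

lemma block_approximation:
  assumes "bp \<in> c00" "bq \<in> c00" "norm (T yp - JG bp) \<le> \<epsilon>" "norm (T yq - JG bq) \<le> \<epsilon>" "0 \<le> \<epsilon>"
    and "\<And>n. n < l \<Longrightarrow> \<bar>bp n - bq n\<bar> \<le> \<epsilon> / (real l + 1)" "\<And>n. R \<le> n \<Longrightarrow> bp n = 0 \<and> bq n = 0"
  shows "norm (T (yp - yq) - JG (restr {l..<R} (\<lambda>n. bp n - bq n))) \<le> 3 * \<epsilon>"
proof -
  define d where "d n = bp n - bq n" for n
  define w where "w n = d n - restr {l..<R} d n" for n
  have d: "d \<in> c00" unfolding d_def using assms(1,2) by (rule c00_diff)
  have main: "norm (T (yp - yq) - JG d) \<le> norm (T yp - JG bp) + norm (T yq - JG bq)"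
    using norm_triangle_ineq4[of "T yp - JG bp" "T yq - JG bq"]
    by (simp add: d_def[abs_def] T.diff JG_diff[OF assms(1,2)] algebra_simps)
  have tail: "normG0 w \<le> \<epsilon>"
  proof (rule normG0_le_of_small_initial_coords[OF _ _ assms(5)])
    show "supp w \<subseteq> {..<l}"
    proof
      fix n assume "n \<in> supp w"
      then have "w n \<noteq> 0" by (simp add: supp_def)
      then show "n \<in> {..<l}"
        using assms(7)[of n] by (cases "R \<le> n") (auto simp: w_def d_def restr_def split: if_splits)
    qed
    show "\<bar>w n\<bar> \<le> \<epsilon> / (real l + 1)" if "n < l" for n
      using assms(6)[OF that] that by (simp add: w_def d_def restr_def)
  qed
  have eq: "T (yp - yq) - JG (restr {l..<R} d) = (T (yp - yq) - JG d) + JG w"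
    using JG_diff[OF d c00_restr[OF d]] by (simp add: w_def[abs_def])
  have "norm (JG w) = normG0 w"
    unfolding w_def[abs_def] using d c00_restr[OF d] by (intro JG_norm c00_diff)
  then have "norm (T (yp - yq) - JG (restr {l..<R} d)) \<le> 3 * \<epsilon>"
    unfolding eq using assms(3,4) main tail norm_triangle_ineq[of "T (yp - yq) - JG d" "JG w"] by linarith
  then show ?thesis by (simp add: d_def[abs_def])
qed

lemma normG0_sum_approximating_blocks_le:
  fixes z :: "nat \<Rightarrow> 'a" and K :: nat
  assumes "mono L" "\<And>i. z i \<in> Y" "\<And>i n. \<bar>U (z i) n\<bar> \<le> B"
    and "\<And>i n. n \<notin> {L i..<L (Suc i)} \<Longrightarrow> \<bar>U (z i) n\<bar> \<le> \<epsilon>" "0 \<le> \<epsilon>"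
    and "\<And>i. v i \<in> c00" "\<And>i. norm (T (z i) - JG (v i)) \<le> \<delta>"
  shows "normG0 (\<lambda>n. \<Sum>i<K. v i n) \<le> onorm T * ((B + real K * \<epsilon>) / c) + real K * \<delta>"
proof -
  have "norm (\<Sum>i<K. z i) \<le> (B + real K * \<epsilon>) / c"
  proof (rule norm_le_if_abs_U_le)
    show "(\<Sum>i<K. z i) \<in> Y" using assms(2) by (intro subspace_sum[OF subspace_Y]) auto
    show "\<bar>U (\<Sum>i<K. z i) n\<bar> \<le> B + real K * \<epsilon>" for n
      using abs_sum_interval_blocks_le[OF assms(1), of "\<lambda>i n. U (z i) n"] assms(3-5)
      by (simp add: U_sum assms(2))
  qed
  then have "norm (T (\<Sum>i<K. z i)) \<le> onorm T * ((B + real K * \<epsilon>) / c)"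
    using onorm[OF T, of "\<Sum>i<K. z i"] mult_left_mono[OF _ onorm_pos_le[OF T]] by fastforce
  moreover have "norm (JG (\<lambda>n. \<Sum>i<K. v i n) - T (\<Sum>i<K. z i)) \<le> real K * \<delta>"
  proof -
    have "norm (JG (\<lambda>n. \<Sum>i<K. v i n) - T (\<Sum>i<K. z i)) \<le> (\<Sum>i<K. norm (T (z i) - JG (v i)))"
      using norm_sum[of "\<lambda>i. JG (v i) - T (z i)" "{..<K}"]
      by (simp add: JG_sum assms(6) T.sum sum_subtractf norm_minus_commute)
    also have "\<dots> \<le> (\<Sum>i<K. \<delta>)" by (intro sum_mono assms(7))
    finally show ?thesis by simp
  qed
  moreover have "(\<lambda>n. \<Sum>i<K. v i n) \<in> c00" using assms(6) by (intro c00_sum) auto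
  then have "norm (JG (\<lambda>n. \<Sum>i<K. v i n)) = normG0 (\<lambda>n. \<Sum>i<K. v i n)" by (rule JG_norm)
  ultimately show ?thesis
    using norm_triangle_ineq2[of "JG (\<lambda>n. \<Sum>i<K. v i n)" "T (\<Sum>i<K. z i)"] by linarith
qed

lemma block_sequence_with_bounded_sums:
  assumes y: "\<And>k. y k \<in> Y" "\<And>k. norm (y k) \<le> 1" and b: "\<And>k. b k \<in> c00"
    and approx: "(\<lambda>k. T (y k) - JG (b k)) \<longlonglongrightarrow> 0"
    and sep: "\<And>N. \<exists>p q. N \<le> p \<and> N \<le> q \<and> e \<le> norm (T (y p) - T (y q))"
    and conv: "\<And>n. convergent (\<lambda>k. U (y k) n)" "\<And>n. convergent (\<lambda>k. b k n)"
    and "0 < \<epsilon>"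
  obtains L v where "mono L" "\<And>i. v i \<in> c00" "\<And>i. supp (v i) \<subseteq> {L i..<L (Suc i)}"
    "\<And>i. e - 3 * \<epsilon> \<le> normG0 (v i)"
    "\<And>K. normG0 (\<lambda>n. \<Sum>i<K. v i n) \<le> onorm T * ((2 * C + real K * \<epsilon>) / c) + real K * (3 * \<epsilon>)"
proof -
  obtain N where N: "\<And>k. N \<le> k \<Longrightarrow> norm (T (y k) - JG (b k)) \<le> \<epsilon>"
    using approx \<open>0 < \<epsilon>\<close> unfolding LIMSEQ_iff by (metis diff_zero less_imp_le)
  obtain L p q where L: "mono L" and pq: "\<And>i. N \<le> p i" "\<And>i. N \<le> q i"
    and sep_pq: "\<And>i. e \<le> norm (T (y (p i)) - T (y (q i)))"
    and below: "\<And>i n. n < L i \<Longrightarrow> \<bar>U (y (p i)) n - U (y (q i)) n\<bar> \<le> \<epsilon>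
        \<and> \<bar>b (p i) n - b (q i) n\<bar> \<le> \<epsilon> / (real (L i) + 1)"
    and above: "\<And>i n. L (Suc i) \<le> n \<Longrightarrow> \<bar>U (y (p i)) n - U (y (q i)) n\<bar> \<le> \<epsilon>
        \<and> b (p i) n = 0 \<and> b (q i) n = 0"
  proof -
    have \<delta>: "0 < \<epsilon> / (real l + 1)" for l using \<open>0 < \<epsilon>\<close> by simp
    show ?thesis
      by (rule gliding_hump[OF U_c0[OF y(1)] b conv sep \<open>0 < \<epsilon>\<close> \<delta>, where N = N])
        (rule that; assumption)
  qed
  define z where "z i = y (p i) - y (q i)" for i
  define v where "v i = restr {L i..<L (Suc i)} (\<lambda>n. b (p i) n - b (q i) n)" for i
  have U_bound: "\<bar>U (y k) n\<bar> \<le> C" for k n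
    using abs_U_le[OF y(1), of k n] mult_left_mono[OF y(2) C_nonneg, of k] by simp
  have v: "v i \<in> c00" for i unfolding v_def by (intro c00_restr c00_diff b)
  have v_approx: "norm (T (z i) - JG (v i)) \<le> 3 * \<epsilon>" for i
    unfolding z_def v_def using b N pq below above \<open>0 < \<epsilon>\<close> by (intro block_approximation) auto
  have supp_v: "supp (v i) \<subseteq> {L i..<L (Suc i)}" for i by (auto simp: v_def supp_def restr_def)
  have lower: "e - 3 * \<epsilon> \<le> normG0 (v i)" for i
    using sep_pq[of i] v_approx[of i] norm_triangle_ineq2[of "T (z i)" "JG (v i)"] JG_norm[OF v]
    by (simp add: z_def T.diff)
  have upper: "normG0 (\<lambda>n. \<Sum>i<K. v i n) \<le> onorm T * ((2 * C + real K * \<epsilon>) / c) + real K * (3 * \<epsilon>)"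
    for K
  proof (rule normG0_sum_approximating_blocks_le[OF L _ _ _ _ v v_approx])
    show "z i \<in> Y" for i unfolding z_def by (intro subspace_diff[OF subspace_Y] y(1))
    show "\<bar>U (z i) n\<bar> \<le> 2 * C" for i n
      using U_bound[of "p i" n] U_bound[of "q i" n] abs_triangle_ineq4[of "U (y (p i)) n" "U (y (q i)) n"]
      by (simp add: z_def U_diff y(1))
    show "n \<notin> {L i..<L (Suc i)} \<Longrightarrow> \<bar>U (z i) n\<bar> \<le> \<epsilon>" for i n
      using below[of n i] above[of i n] by (auto simp: z_def U_diff y(1) not_le)
  qed (use \<open>0 < \<epsilon>\<close> in simp)
  show ?thesis using that[OF L v supp_v lower upper] .
qed

lemma Cauchy_T_of_convergent_coordinates:
  assumes y: "\<And>k. y k \<in> Y" "\<And>k. norm (y k) \<le> 1" and b: "\<And>k. b k \<in> c00"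
    and approx: "(\<lambda>k. T (y k) - JG (b k)) \<longlonglongrightarrow> 0"
    and conv: "\<And>n. convergent (\<lambda>k. U (y k) n)" "\<And>n. convergent (\<lambda>k. b k n)"
  shows "Cauchy (\<lambda>k. T (y k))"
proof (rule ccontr)
  assume "\<not> Cauchy (\<lambda>k. T (y k))"
  then obtain e where "0 < e" and "\<forall>N. \<exists>p\<ge>N. \<exists>q\<ge>N. e \<le> norm (T (y p) - T (y q))"
    unfolding Cauchy_def dist_norm by (auto simp: not_less)
  then have sep: "\<exists>p q. N \<le> p \<and> N \<le> q \<and> e \<le> norm (T (y p) - T (y q))" for N by blast
  define A where "A = onorm T * ((2 * C + 1) / c) + 3"
  obtain j K where "1 \<le> j" "1 \<le> K" "K \<le> nseq (2 * j)" and large: "A < K * (e/4) / mseq (2 * j)"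
    using exists_length_le_nseq_average_gt[of "e/4" A] \<open>0 < e\<close> by auto
  define \<epsilon> where "\<epsilon> = min (e/6) (1 / K)"
  have "0 < \<epsilon>" using \<open>0 < e\<close> \<open>1 \<le> K\<close> by (simp add: \<epsilon>_def)
  have "real K * \<epsilon> \<le> 1" using \<open>1 \<le> K\<close> by (simp add: \<epsilon>_def min_def field_simps)
  obtain L v where L: "mono L" and v: "\<And>i. v i \<in> c00" "\<And>i. supp (v i) \<subseteq> {L i..<L (Suc i)}"
    and v_lower: "\<And>i. e - 3 * \<epsilon> \<le> normG0 (v i)"
    and sums: "\<And>K. normG0 (\<lambda>n. \<Sum>i<K. v i n) \<le> onorm T * ((2 * C + real K * \<epsilon>) / c) + real K * (3 * \<epsilon>)"
    using block_sequence_with_bounded_sums[OF y b approx sep conv \<open>0 < \<epsilon>\<close>] by blast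
  have "K * (e/4) / mseq (2 * j) \<le> normG0 (\<lambda>n. \<Sum>i<K. v i n)"
  proof (rule normG0_sum_blocks_ge[OF L \<open>1 \<le> j\<close> \<open>K \<le> nseq (2 * j)\<close>])
    show "e/4 < normG0 (v i)" for i
      using v_lower[of i] \<open>0 < e\<close> by (simp add: \<epsilon>_def min_def split: if_splits)
  qed (use \<open>0 < e\<close> v in auto)
  also have "\<dots> \<le> A"
  proof -
    have "onorm T * ((2 * C + real K * \<epsilon>) / c) \<le> onorm T * ((2 * C + 1) / c)"
      using \<open>real K * \<epsilon> \<le> 1\<close> onorm_pos_le[OF T] c_pos
      by (intro mult_left_mono divide_right_mono) auto
    then show ?thesis using sums[of K] \<open>real K * \<epsilon> \<le> 1\<close> by (simp add: A_def)
  qed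
  finally show False using large by simp
qed

lemma compact_closure_T_unit_ball:
  assumes dense: "closure (JG ` c00) = UNIV"
  shows "compact (closure (T ` (Y \<inter> cball 0 1)))"
proof (rule ccontr)
  assume "\<not> compact (closure (T ` (Y \<inter> cball 0 1)))"
  then obtain \<sigma> :: "nat \<Rightarrow> 'b" where \<sigma>: "range \<sigma> \<subseteq> T ` (Y \<inter> cball 0 1)" "\<And>r. strict_mono r \<Longrightarrow> \<not> Cauchy (\<sigma> \<circ> r)"
    by (rule not_compact_closure_obtains_no_Cauchy_subseq) blast
  have "\<exists>x. x \<in> Y \<and> norm x \<le> 1 \<and> T x = \<sigma> k" for k
  proof -
    obtain x where "x \<in> Y \<inter> cball 0 1" "\<sigma> k = T x" using \<sigma>(1) by blast
    then show ?thesis by auto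
  qed
  then obtain y where y: "\<And>k. y k \<in> Y" "\<And>k. norm (y k) \<le> 1" and Ty: "\<And>k. T (y k) = \<sigma> k"
    by metis
  obtain b where b: "\<And>k. b k \<in> c00" and b_dist: "\<And>k. dist (JG (b k)) (T (y k)) < 1 / real (Suc k)"
    by (rule dense_image_obtains_approximations[OF dense, where x = "\<lambda>k. T (y k)"]) blast
  have approx: "(\<lambda>k. T (y k) - JG (b k)) \<longlonglongrightarrow> 0"
    using b_dist by (intro LIMSEQ_norm_0) (simp add: dist_norm norm_minus_commute)
  have "\<bar>U (y k) n\<bar> \<le> C" for k n
    using abs_U_le[OF y(1), of k n] mult_left_mono[OF y(2) C_nonneg, of k] by simp
  moreover have "\<bar>b k n\<bar> \<le> onorm T + 1" for k n
  proof -
    have "\<bar>b k n\<bar> \<le> norm (JG (b k))" using abs_le_normG0[OF b] JG_norm[OF b] by simp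
    also have "\<dots> \<le> norm (T (y k)) + norm (JG (b k) - T (y k))" by (rule norm_triangle_sub)
    also have "\<dots> \<le> onorm T + 1"
    proof (rule add_mono)
      show "norm (T (y k)) \<le> onorm T"
        using onorm[OF T, of "y k"] mult_left_mono[OF y(2) onorm_pos_le[OF T], of k] by simp
      have "1 / real (Suc k) \<le> 1" by simp
      then have "dist (JG (b k)) (T (y k)) < 1" using b_dist[of k] by linarith
      then show "norm (JG (b k) - T (y k)) \<le> 1" by (simp add: dist_norm)
    qed
    finally show ?thesis .
  qed
  ultimately obtain r where r: "strict_mono r" "\<And>n. convergent (\<lambda>k. U (y (r k)) n)"
    "\<And>n. convergent (\<lambda>k. b (r k) n)"
    by (rule convergent_coordinates_subseq2[of "\<lambda>k. U (y k)" "\<lambda>_. C" b "\<lambda>_. onorm T + 1"]) blast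
  have "Cauchy (\<lambda>k. T (y (r k)))"
    using LIMSEQ_subseq_LIMSEQ[OF approx r(1)] y b r(2,3)
    by (intro Cauchy_T_of_convergent_coordinates) (auto simp: o_def)
  then show False using \<sigma>(2)[OF r(1)] Ty by (simp add: o_def)
qed

end

theorem mainTheorem15:
  fixes \<Omega>1 \<Omega>2 :: "nat set"
    and \<sigma> :: "(nat \<Rightarrow> real) list \<Rightarrow> nat"
    and J0 :: "(nat \<Rightarrow> real) \<Rightarrow> 'a::banach"
    and JG :: "(nat \<Rightarrow> real) \<Rightarrow> 'b::banach"
    and T :: "'a \<Rightarrow> 'b"
    and Y :: "'a set"
  assumes "infinite \<Omega>1" and "infinite \<Omega>2" and "\<Omega>1 \<inter> \<Omega>2 = {}"
    and "0 \<notin> \<Omega>1" and "0 \<notin> \<Omega>2"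
    and "admissible_sigma \<Omega>2 \<sigma>"
    and "is_completion (normW0 \<sigma> \<Omega>1) J0"
    and "is_completion normG0 JG"
    and "bounded_linear T" and "\<forall>x\<in>c00. T (J0 x) = JG x"
    and "subspace Y" and "closed Y" and "\<nexists>B. finite B \<and> span B = Y"
    and "\<not> compact (closure (T ` (Y \<inter> cball 0 1)))"
  shows "\<not> iso_to_subspace_c0 Y"
proof
  assume "iso_to_subspace_c0 Y"
  then obtain U c C where U_lincomb: "\<forall>y\<in>Y. \<forall>z\<in>Y. \<forall>a b. U (a *\<^sub>R y + b *\<^sub>R z) = (\<lambda>n. a * U y n + b * U z n)"
    and U_c0: "\<forall>y\<in>Y. U y \<in> c0" and "0 < c" "0 < C"
    and U_bounds: "\<forall>y\<in>Y. c * norm y \<le> supnorm (U y) \<and> supnorm (U y) \<le> C * norm y"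
    unfolding iso_to_subspace_c0_def by blast
  have JG: "\<forall>x\<in>c00. \<forall>y\<in>c00. \<forall>a b. JG (\<lambda>n. a * x n + b * y n) = a *\<^sub>R JG x + b *\<^sub>R JG y"
    "\<forall>x\<in>c00. norm (JG x) = normG0 x" "closure (JG ` c00) = UNIV"
    using assms(8) unfolding is_completion_def by blast+
  interpret c0_embedding_with_G0_map Y U c C T JG
    using assms(9,11) U_lincomb U_c0 U_bounds \<open>0 < c\<close> \<open>0 < C\<close> JG(1,2)
    by (intro c0_embedding_with_G0_map.intro) auto
  show False using compact_closure_T_unit_ball[OF JG(3)] assms(14) by contradiction
qed

end
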